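(* Let $T$, $\mathcal{S}=\mathcal{S}_+\cup\mathcal{S}_-$, $\lambda,\mu$, $P_\lambda,P_\mu$ be as in the context, and let $\{(Y_n,\kappa_n)\}_{n\ge0}$ be the discrete-time QBD with transition blocks $$C'_{-1}=\frac12\begin{bmatrix}0&P_{\mu+-}\\0&P_{\mu--}\end{bmatrix},\quad C'_0=\frac12\begin{bmatrix}P_{\mu++}&P_{\lambda+-}\\P_{\mu-+}&P_{\lambda--}\end{bmatrix},\quad C'_1=\frac12\begin{bmatrix}P_{\lambda++}&0\\P_{\lambda-+}&0\end{bmatrix},$$ started from $Y_0=1$, $\kappa_0\in\mathcal{S}_+$. Define $\tau_0:=0$ and $\tau_{k+1}:=\min\{n>\tau_k: Y_n\neq Y_{\tau_k}\}$, and set $M_{\tau_k}:=Y_{\tau_k}-1/2$ if $\kappa_{\tau_k}\in\mathcal{S}_+$ and $M_{\tau_k}:=Y_{\tau_k}+1/2$ if $\kappa_{\tau_k}\in\mathcal{S}_-$. Then $\{(M_{\tau_k},\kappa_{\tau_k})\}_{k\in\mathbb{N}}$ is a quasi-birth-death process on $(\mathbb{Z}+1/2)\times\mathcal{S}$ with transition blocks $$D_{-1}=\begin{bmatrix}0&0\\0&F\end{bmatrix},\quad D_0=\begin{bmatrix}0&G\\H&0\end{bmatrix},\quad D_1=\begin{bmatrix}E&0\\0&0\end{bmatrix},$$ where $E\in\mathbb{R}^{|\mathcal{S}_+|\times|\mathcal{S}_+|}$, $F\in\mathbb{R}^{|\mathcal{S}_-|\times|\mathcal{S}_-|}$, $G\in\mathbb{R}^{|\mathcal{S}_+|\times|\mathcal{S}_-|}$,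 $H\in\mathbb{R}^{|\mathcal{S}_-|\times|\mathcal{S}_+|}$ are given by $$\begin{bmatrix}E&G\\H&F\end{bmatrix}=\Big(I-\tfrac12\begin{bmatrix}P_{\mu++}&P_{\lambda+-}\\P_{\mu-+}&P_{\lambda--}\end{bmatrix}\Big)^{-1}\tfrac12\begin{bmatrix}P_{\lambda++}&P_{\mu+-}\\P_{\lambda-+}&P_{\mu--}\end{bmatrix} =\begin{bmatrix}I-\mu^{-1}T_{++}&-\lambda^{-1}T_{+-}\\-\mu^{-1}T_{-+}&I-\lambda^{-1}T_{--}\end{bmatrix}^{-1}\begin{bmatrix}I+\lambda^{-1}T_{++}&\mu^{-1}T_{+-}\\\lambda^{-1}T_{-+}&I+\mu^{-1}T_{--}\end{bmatrix}.$$
   Context: $T$ is the generator of a continuous-time Markov chain on a finite set $\mathcal{S}=\mathcal{S}_+\cup\mathcal{S}_-$ (disjoint, both nonempty), partitioned into blocks $T_{++},T_{+-},T_{-+},T_{--}$ according to $\mathcal{S}_\pm$. $\lambda,\mu>0$ satisfy $\lambda,\mu\ge\max_i|T_{ii}|$; $P_\lambda:=I+\lambda^{-1}T$, $P_\mu:=I+\mu^{-1}T$ with blocks $P_{\lambda++}$ etc. A discrete-time quasi-birth-death process (QBD) with transition blocks $L_{-1},L_0,L_1$ is a Markov chain $\{(Y_n,\kappa_n)\}$ on $\mathbb{Z}\times\mathcal{S}$ with $\mathbb{P}[Y_n=k+d,\kappa_n=j\mid Y_{n-1}=k,\kappa_{n-1}=i]=(L_d)_{ij}$ for $d\in\{-1,0,1\}$;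 for a QBD on $(\mathbb{Z}+1/2)\times\mathcal{S}$ the levels are shifted by $1/2$ in the same way. Matrices are partitioned into blocks according to $\mathcal{S}_+,\mathcal{S}_-$. *)

theory Defs
  imports "HOL-Probability.Probability"
begin

definition generator :: "real^'s::finite^'s \<Rightarrow> bool" where
  "generator T \<longleftrightarrow> (\<forall>i j. i \<noteq> j \<longrightarrow> T$i$j \<ge> 0) \<and> (\<forall>i. (\<Sum>j\<in>UNIV. T$i$j) = 0)"

definition Pmat :: "real^'s::finite^'s \<Rightarrow> real \<Rightarrow> real^'s^'s" where
  "Pmat T c = mat 1 + (1 / c) *\<^sub>R T"

definition qbd_step :: "real^'s::finite^'s \<Rightarrow> real^'s^'s \<Rightarrow> real^'s^'s
      \<Rightarrow> ('l::ring_1 \<times> 's) \<Rightarrow> ('l \<times> 's) \<Rightarrow> real" where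
  "qbd_step Lm L0 Lp x y =
     (if fst y = fst x - 1 then Lm $ snd x $ snd y
      else if fst y = fst x then L0 $ snd x $ snd y
      else if fst y = fst x + 1 then Lp $ snd x $ snd y
      else 0)"

(* X is a (time-homogeneous) discrete-time QBD with blocks Lm, L0, Lp on the probability
   space M: each X n is a random variable, and
   P[X_0..X_{n+1} = x_0..x_{n+1}] = P[X_0..X_n = x_0..x_n] * (transition prob x_n -> x_{n+1}),
   i.e. P[X_{n+1} = y | X_0,...,X_n] is given by the blocks. *)
definition is_QBD :: "'w measure \<Rightarrow> (nat \<Rightarrow> 'w \<Rightarrow> ('l::ring_1 \<times> 's::finite))
      \<Rightarrow> real^'s^'s \<Rightarrow> real^'s^'s \<Rightarrow> real^'s^'s \<Rightarrow> bool" where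
  "is_QBD M X Lm L0 Lp \<longleftrightarrow>
     (\<forall>n. X n \<in> measurable M (count_space UNIV)) \<and>
     (\<forall>n (xs :: nat \<Rightarrow> 'l \<times> 's).
        measure M {\<omega> \<in> space M. \<forall>i\<le>Suc n. X i \<omega> = xs i}
        = measure M {\<omega> \<in> space M. \<forall>i\<le>n. X i \<omega> = xs i} * qbd_step Lm L0 Lp (xs n) (xs (Suc n)))"

(* The blocks C'_{-1}, C'_0, C'_1 (Sp = S_+, its complement = S_-). *)
definition Cm :: "real^'s::finite^'s \<Rightarrow> 's set \<Rightarrow> real \<Rightarrow> real \<Rightarrow> real^'s^'s" where
  "Cm T Sp lam mu = (\<chi> i j. if j \<in> Sp then 0 else Pmat T mu $ i $ j / 2)"

definition C0 :: "real^'s::finite^'s \<Rightarrow> 's set \<Rightarrow> real \<Rightarrow> real \<Rightarrow> real^'s^'s" where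
  "C0 T Sp lam mu = (\<chi> i j. if j \<in> Sp then Pmat T mu $ i $ j / 2 else Pmat T lam $ i $ j / 2)"

definition Cp :: "real^'s::finite^'s \<Rightarrow> 's set \<Rightarrow> real \<Rightarrow> real \<Rightarrow> real^'s^'s" where
  "Cp T Sp lam mu = (\<chi> i j. if j \<in> Sp then Pmat T lam $ i $ j / 2 else 0)"

definition Amat :: "real^'s::finite^'s \<Rightarrow> 's set \<Rightarrow> real \<Rightarrow> real \<Rightarrow> real^'s^'s" where
  "Amat T Sp lam mu = (\<chi> i j. if j \<in> Sp then Pmat T mu $ i $ j else Pmat T lam $ i $ j)"

definition Bmat :: "real^'s::finite^'s \<Rightarrow> 's set \<Rightarrow> real \<Rightarrow> real \<Rightarrow> real^'s^'s" where
  "Bmat T Sp lam mu = (\<chi> i j. if j \<in> Sp then Pmat T lam $ i $ j else Pmat T mu $ i $ j)"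

definition Kmat :: "real^'s::finite^'s \<Rightarrow> 's set \<Rightarrow> real \<Rightarrow> real \<Rightarrow> real^'s^'s" where
  "Kmat T Sp lam mu =
     matrix_inv (mat 1 - (1/2) *\<^sub>R Amat T Sp lam mu) ** ((1/2) *\<^sub>R Bmat T Sp lam mu)"

definition Xmat :: "real^'s::finite^'s \<Rightarrow> 's set \<Rightarrow> real \<Rightarrow> real \<Rightarrow> real^'s^'s" where
  "Xmat T Sp lam mu = mat 1 - (\<chi> i j. if j \<in> Sp then T$i$j / mu else T$i$j / lam)"

definition Ymat :: "real^'s::finite^'s \<Rightarrow> 's set \<Rightarrow> real \<Rightarrow> real \<Rightarrow> real^'s^'s" where
  "Ymat T Sp lam mu = mat 1 + (\<chi> i j. if j \<in> Sp then T$i$j / lam else T$i$j / mu)"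

definition Dm :: "real^'s::finite^'s \<Rightarrow> 's set \<Rightarrow> real^'s^'s" where
  "Dm K Sp = (\<chi> i j. if i \<notin> Sp \<and> j \<notin> Sp then K$i$j else 0)"

definition D0 :: "real^'s::finite^'s \<Rightarrow> 's set \<Rightarrow> real^'s^'s" where
  "D0 K Sp = (\<chi> i j. if (i \<in> Sp) \<noteq> (j \<in> Sp) then K$i$j else 0)"

definition Dp :: "real^'s::finite^'s \<Rightarrow> 's set \<Rightarrow> real^'s^'s" where
  "Dp K Sp = (\<chi> i j. if i \<in> Sp \<and> j \<in> Sp then K$i$j else 0)"

fun tau :: "(nat \<Rightarrow> int) \<Rightarrow> nat \<Rightarrow> nat" where
  "tau y 0 = 0"
| "tau y (Suc k) = (LEAST n. tau y k < n \<and> y n \<noteq> y (tau y k))"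

(* (M_{tau_k}, kappa_{tau_k}) with levels in Z + 1/2 represented as reals *)
definition embedded :: "(nat \<Rightarrow> 'w \<Rightarrow> int) \<Rightarrow> (nat \<Rightarrow> 'w \<Rightarrow> 's) \<Rightarrow> 's set
      \<Rightarrow> nat \<Rightarrow> 'w \<Rightarrow> real \<times> 's" where
  "embedded Y \<kappa> Sp k \<omega> =
     (let t = tau (\<lambda>n. Y n \<omega>) k in
       (if \<kappa> t \<omega> \<in> Sp then of_int (Y t \<omega>) - 1/2 else of_int (Y t \<omega>) + 1/2, \<kappa> t \<omega>))"

end

theory Submission
  imports Defs
begin

(* Between two level changes the chain makes only C'_0-steps, so the probability of staying
   at the current level for N steps and then entering phase j at a new level is
   (C'_0^N C'_{\<pm>1})_{ij}.  The rows of C'_0 sum to less than 1, hence the chain leaves every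
   level almost surely and, summing over N, the jump probabilities are the entries of
   (I - C'_0)^{-1} (C'_{-1} + C'_1) = K.  Conditioning on the whole history up to tau_k, which
   determines the past of the embedded chain, turns this into the QBD property.  The shift by
   1/2 works because upward jumps end in S_+ and downward jumps in S_-: the embedded level then
   moves by +1 exactly from S_+ to S_+, by -1 from S_- to S_-, and stays put otherwise. *)

section \<open>Matrix powers and the Neumann series\<close>

fun matpow :: "real^'n::finite^'n \<Rightarrow> nat \<Rightarrow> real^'n^'n" where
  "matpow A 0 = mat 1"
| "matpow A (Suc n) = matpow A n ** A"

lemma matpow_Suc_left: "matpow A (Suc n) = A ** matpow A n"
proof (induction n)
  case 0
  then show ?case by simp
next
  case (Suc n)
  then show ?case by (metis matpow.simps(2) matrix_mul_assoc)
qed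

lemma matpow_nonneg:
  assumes "\<forall>i j. 0 \<le> A$i$j"
  shows "0 \<le> matpow A n $i$j"
proof (induction n arbitrary: i j)
  case 0
  then show ?case by (simp add: mat_def)
next
  case (Suc n)
  then show ?case using assms by (simp add: matrix_matrix_mult_def sum_nonneg)
qed

lemma row_sum_matrix_mult:
  fixes P :: "real^'m::finite^'n" and A :: "real^'p::finite^'m"
  shows "(\<Sum>j\<in>UNIV. (P ** A)$i$j) = (\<Sum>k\<in>UNIV. P$i$k * (\<Sum>j\<in>UNIV. A$k$j))"
proof -
  have "(\<Sum>j\<in>UNIV. (P ** A)$i$j) = (\<Sum>j\<in>UNIV. \<Sum>k\<in>UNIV. P$i$k * A$k$j)"
    by (simp add: matrix_matrix_mult_def)
  also have "\<dots> = (\<Sum>k\<in>UNIV. \<Sum>j\<in>UNIV. P$i$k * A$k$j)"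
    by (rule sum.swap)
  finally show ?thesis by (simp add: sum_distrib_left)
qed

lemma matpow_row_sum_le:
  assumes "\<forall>i j. 0 \<le> A$i$j" "\<forall>i. (\<Sum>j\<in>UNIV. A$i$j) \<le> r" "0 \<le> r"
  shows "(\<Sum>j\<in>UNIV. matpow A n $i$j) \<le> r ^ n"
proof (induction n arbitrary: i)
  case 0
  then show ?case by (simp add: mat_def)
next
  case (Suc n)
  have "(\<Sum>j\<in>UNIV. matpow A (Suc n) $i$j) = (\<Sum>k\<in>UNIV. matpow A n $i$k * (\<Sum>j\<in>UNIV. A$k$j))"
    by (simp only: matpow.simps row_sum_matrix_mult)
  also have "\<dots> \<le> (\<Sum>k\<in>UNIV. matpow A n $i$k * r)"
    by (intro sum_mono mult_left_mono) (use assms matpow_nonneg[OF assms(1)] in auto)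
  also have "\<dots> = (\<Sum>k\<in>UNIV. matpow A n $i$k) * r"
    by (simp add: sum_distrib_right)
  also have "\<dots> \<le> r ^ n * r"
    using Suc assms(3) by (intro mult_right_mono) auto
  finally show ?case by (simp add: mult.commute)
qed

definition strictly_substochastic :: "real^'n::finite^'n \<Rightarrow> bool" where
  "strictly_substochastic A \<longleftrightarrow> (\<forall>i j. 0 \<le> A$i$j) \<and> (\<forall>i. (\<Sum>j\<in>UNIV. A$i$j) < 1)"

lemma strictly_substochastic_row_sum_bound:
  assumes "strictly_substochastic A"
  obtains r where "0 \<le> r" "r < 1" "\<forall>i. (\<Sum>j\<in>UNIV. A$i$j) \<le> r"
proof -
  define r where "r = Max (range (\<lambda>i. \<Sum>j\<in>UNIV. A$i$j))"
  have le: "\<forall>i. (\<Sum>j\<in>UNIV. A$i$j) \<le> r"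
    unfolding r_def by auto
  have "r \<in> range (\<lambda>i. \<Sum>j\<in>UNIV. A$i$j)"
    unfolding r_def by (intro Max_in) auto
  then have "r < 1"
    using assms by (auto simp: strictly_substochastic_def)
  moreover have "0 \<le> r"
    using assms le by (meson order.trans strictly_substochastic_def sum_nonneg)
  ultimately show thesis using le that by blast
qed

lemma summable_matpow_entry:
  assumes "strictly_substochastic A"
  shows "summable (\<lambda>n. matpow A n $i$j)"
proof -
  obtain r where r: "0 \<le> r" "r < 1" "\<forall>i. (\<Sum>j\<in>UNIV. A$i$j) \<le> r"
    using strictly_substochastic_row_sum_bound[OF assms] by blast
  have nonneg: "\<forall>i j. 0 \<le> A$i$j"
    using assms by (simp add: strictly_substochastic_def)
  have "matpow A n $i$j \<le> r ^ n" for n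
  proof -
    have "matpow A n $i$j \<le> (\<Sum>j\<in>UNIV. matpow A n $i$j)"
      by (rule member_le_sum) (use matpow_nonneg[OF nonneg] in auto)
    then show ?thesis using matpow_row_sum_le[OF nonneg r(3,1), of n i] by linarith
  qed
  then have "norm (matpow A n $i$j) \<le> r ^ n" for n
    using matpow_nonneg[OF nonneg] by simp
  moreover have "summable (\<lambda>n. r ^ n)"
    using r by (simp add: summable_geometric)
  ultimately show ?thesis
    by (rule summable_comparison_test'[where N = 0, rotated])
qed

lemma matrix_diff_mult_distrib:
  fixes A B :: "real^'n::finite^'m"
  shows "(B - A) ** N = B ** N - A ** N"
  by (simp add: vec_eq_iff matrix_matrix_mult_def sum_subtractf left_diff_distrib)

definition neumann_series :: "real^'n::finite^'n \<Rightarrow> real^'n^'n" where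
  "neumann_series A = (\<chi> i j. \<Sum>n. matpow A n $i$j)"

lemma neumann_series_right_inverse:
  assumes "strictly_substochastic A"
  shows "(mat 1 - A) ** neumann_series A = mat 1"
proof -
  note summable = summable_matpow_entry[OF assms]
  have "((mat 1 - A) ** neumann_series A)$i$j = mat 1 $i$j" for i j
  proof -
    have "(A ** neumann_series A)$i$j = (\<Sum>k\<in>UNIV. \<Sum>n. A$i$k * matpow A n $k$j)"
      by (simp add: matrix_matrix_mult_def neumann_series_def suminf_mult summable)
    also have "\<dots> = (\<Sum>n. \<Sum>k\<in>UNIV. A$i$k * matpow A n $k$j)"
      by (rule suminf_sum[symmetric]) (simp add: summable summable_mult)
    also have "\<dots> = (\<Sum>n. matpow A (Suc n) $i$j)"
      by (simp only: matpow_Suc_left) (simp add: matrix_matrix_mult_def)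
    finally have "(A ** neumann_series A)$i$j = (\<Sum>n. matpow A (Suc n) $i$j)" .
    moreover have "(\<Sum>n. matpow A n $i$j) = (\<Sum>n. matpow A (Suc n) $i$j) + matpow A 0 $i$j"
      using suminf_split_head[OF summable[of i j]] by simp
    ultimately show ?thesis
      by (simp add: matrix_diff_mult_distrib neumann_series_def)
  qed
  then show ?thesis by (simp add: vec_eq_iff)
qed

lemma matrix_mult_scaleR_right:
  fixes A :: "real^'m::finite^'n" and B :: "real^'p::finite^'m"
  shows "A ** (c *\<^sub>R B) = c *\<^sub>R (A ** B)"
  by (simp add: vec_eq_iff matrix_matrix_mult_def sum_distrib_left mult.left_commute)

lemma right_inverse_imp_invertible:
  fixes A B :: "real^'n::finite^'n"
  assumes "A ** B = mat 1"
  shows "invertible A"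
  using assms matrix_left_right_inverse unfolding invertible_def by blast

lemma right_inverse_imp_matrix_inv_eq:
  fixes A B :: "real^'n::finite^'n"
  assumes "A ** B = mat 1"
  shows "matrix_inv A = B"
proof -
  have "B ** A = mat 1"
    using assms matrix_left_right_inverse by blast
  then have "\<exists>A'. A ** A' = mat 1 \<and> A' ** A = mat 1"
    using assms by blast
  then have inv: "A ** matrix_inv A = mat 1 \<and> matrix_inv A ** A = mat 1"
    unfolding matrix_inv_def by (rule someI_ex)
  have "matrix_inv A = (matrix_inv A ** A) ** B"
    using assms by (metis matrix_mul_assoc matrix_mul_rid)
  then show ?thesis using inv by simp
qed

section \<open>The blocks built from a uniformised generator\<close>

lemma Pmat_entry: "Pmat T c $i$j = (if i = j then 1 else 0) + T$i$j / c"
  by (simp add: Pmat_def mat_def)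

lemma generator_diag_nonpos:
  assumes "generator T"
  shows "T$i$i \<le> 0"
proof -
  have "(\<Sum>j\<in>UNIV. T$i$j) = T$i$i + (\<Sum>j\<in>UNIV-{i}. T$i$j)"
    by (simp add: sum.remove)
  moreover have "0 \<le> (\<Sum>j\<in>UNIV-{i}. T$i$j)"
    using assms by (intro sum_nonneg) (auto simp: generator_def)
  ultimately show ?thesis
    using assms by (simp add: generator_def)
qed

lemma Pmat_nonneg:
  assumes "generator T" "0 < c" "\<bar>T$i$i\<bar> \<le> c"
  shows "0 \<le> Pmat T c $i$j"
proof (cases "i = j")
  case True
  then show ?thesis
    using assms generator_diag_nonpos[OF assms(1), of i] by (simp add: Pmat_entry field_simps)
next
  case False
  then show ?thesis
    using assms by (simp add: Pmat_entry generator_def)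
qed

lemma Pmat_row_sum:
  assumes "generator T" "0 < c"
  shows "(\<Sum>j\<in>UNIV. Pmat T c $i$j) = 1"
proof -
  have "(\<Sum>j\<in>UNIV. Pmat T c $i$j) = (\<Sum>j\<in>UNIV. if i = j then 1 else 0) + (\<Sum>j\<in>UNIV. T$i$j) / c"
    by (simp add: Pmat_entry sum.distrib sum_divide_distrib)
  then show ?thesis
    using assms by (simp add: generator_def)
qed

locale uniformised_generator =
  fixes T :: "real^'s::finite^'s" and Sp :: "'s set" and lam mu :: real
  assumes generator: "generator T" and lam_pos: "0 < lam" and mu_pos: "0 < mu"
    and diag_le_lam: "\<forall>i. \<bar>T$i$i\<bar> \<le> lam" and diag_le_mu: "\<forall>i. \<bar>T$i$i\<bar> \<le> mu"
begin

lemma Pmat_lam_nonneg: "0 \<le> Pmat T lam $i$j"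
  using Pmat_nonneg generator lam_pos diag_le_lam by blast

lemma Pmat_mu_nonneg: "0 \<le> Pmat T mu $i$j"
  using Pmat_nonneg generator mu_pos diag_le_mu by blast

lemma Bmat_row_sum_pos: "0 < (\<Sum>j\<in>UNIV. Bmat T Sp lam mu $i$j)"
proof (rule ccontr)
  assume "\<not> ?thesis"
  moreover have nonneg: "0 \<le> Bmat T Sp lam mu $i$j" for j
    by (simp add: Bmat_def Pmat_lam_nonneg Pmat_mu_nonneg)
  ultimately have "(\<Sum>j\<in>UNIV. Bmat T Sp lam mu $i$j) = 0"
    by (meson order.antisym not_less sum_nonneg)
  then have zero: "Bmat T Sp lam mu $i$j = 0" for j
    using sum_nonneg_eq_0_iff[of UNIV "\<lambda>j. Bmat T Sp lam mu $i$j"] nonneg by simp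
  have off_diag: "T$i$j = 0" if "j \<noteq> i" for j
    using zero[of j] that lam_pos mu_pos by (auto simp: Bmat_def Pmat_entry split: if_splits)
  have "(\<Sum>j\<in>UNIV. T$i$j) = (\<Sum>j\<in>UNIV. if j = i then T$i$i else 0)"
    by (intro sum.cong) (auto simp: off_diag)
  then have "T$i$i = 0"
    using generator by (simp add: generator_def)
  then show False
    using zero[of i] by (auto simp: Bmat_def Pmat_entry split: if_splits)
qed

lemma C0_strictly_substochastic: "strictly_substochastic (C0 T Sp lam mu)"
  unfolding strictly_substochastic_def
proof (intro conjI allI)
  fix i j
  show "0 \<le> C0 T Sp lam mu $i$j"
    by (simp add: C0_def Pmat_lam_nonneg Pmat_mu_nonneg)
next
  fix i
  have "(\<Sum>j\<in>UNIV. 2 * C0 T Sp lam mu $i$j) + (\<Sum>j\<in>UNIV. Bmat T Sp lam mu $i$j)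
      = (\<Sum>j\<in>UNIV. Pmat T mu $i$j) + (\<Sum>j\<in>UNIV. Pmat T lam $i$j)"
    unfolding sum.distrib[symmetric] by (intro sum.cong) (auto simp: C0_def Bmat_def)
  also have "\<dots> = 2"
    using Pmat_row_sum[OF generator lam_pos] Pmat_row_sum[OF generator mu_pos] by simp
  finally have "(\<Sum>j\<in>UNIV. 2 * C0 T Sp lam mu $i$j) + (\<Sum>j\<in>UNIV. Bmat T Sp lam mu $i$j) = 2" .
  moreover have "(\<Sum>j\<in>UNIV. 2 * C0 T Sp lam mu $i$j) = 2 * (\<Sum>j\<in>UNIV. C0 T Sp lam mu $i$j)"
    by (rule sum_distrib_left[symmetric])
  ultimately show "(\<Sum>j\<in>UNIV. C0 T Sp lam mu $i$j) < 1"
    using Bmat_row_sum_pos[of i] by linarith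
qed

lemma C0_eq_half_Amat: "C0 T Sp lam mu = (1/2) *\<^sub>R Amat T Sp lam mu"
  by (simp add: vec_eq_iff C0_def Amat_def)

lemma Xmat_eq: "Xmat T Sp lam mu = 2 *\<^sub>R (mat 1 - C0 T Sp lam mu)"
  by (simp add: vec_eq_iff C0_def Xmat_def Pmat_entry mat_def field_simps)

lemma Ymat_eq_Bmat: "Ymat T Sp lam mu = Bmat T Sp lam mu"
  by (simp add: vec_eq_iff Ymat_def Bmat_def Pmat_entry mat_def field_simps)

lemma I_minus_C0_right_inverse: "(mat 1 - C0 T Sp lam mu) ** neumann_series (C0 T Sp lam mu) = mat 1"
  by (rule neumann_series_right_inverse[OF C0_strictly_substochastic])

lemma Xmat_right_inverse: "Xmat T Sp lam mu ** ((1/2) *\<^sub>R neumann_series (C0 T Sp lam mu)) = mat 1"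
  by (simp add: Xmat_eq matrix_mult_scaleR_right scalar_matrix_assoc[symmetric] I_minus_C0_right_inverse)

lemma Kmat_eq_neumann_series:
  "Kmat T Sp lam mu = neumann_series (C0 T Sp lam mu) ** ((1/2) *\<^sub>R Bmat T Sp lam mu)"
  using right_inverse_imp_matrix_inv_eq[OF I_minus_C0_right_inverse]
  by (simp add: Kmat_def C0_eq_half_Amat)

lemma Kmat_eq_Xmat_inv_Ymat: "Kmat T Sp lam mu = matrix_inv (Xmat T Sp lam mu) ** Ymat T Sp lam mu"
  using right_inverse_imp_matrix_inv_eq[OF Xmat_right_inverse]
  by (simp add: Kmat_eq_neumann_series Ymat_eq_Bmat matrix_mult_scaleR_right scalar_matrix_assoc[symmetric])

end

section \<open>Sample paths of a QBD\<close>

lemma (in finite_measure) measure_UNION_proportional: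
  fixes A B :: "nat \<Rightarrow> 'a set"
  assumes "range A \<subseteq> sets M" "disjoint_family A" "range B \<subseteq> sets M" "disjoint_family B"
    and "\<And>n. measure M (B n) = measure M (A n) * c"
  shows "measure M (\<Union>n. B n) = measure M (\<Union>n. A n) * c"
proof -
  have "(\<lambda>n. measure M (B n)) sums (measure M (\<Union>n. A n) * c)"
    unfolding assms(5) by (rule sums_mult2[OF finite_measure_UNION[OF assms(1,2)]])
  then show ?thesis
    using finite_measure_UNION[OF assms(3,4)] sums_unique2 by blast
qed

lemma map_upt_eq_iff: "map f [0..<n] = xs \<longleftrightarrow> length xs = n \<and> (\<forall>i<n. f i = xs ! i)"
  by (auto simp: list_eq_iff_nth_eq)

locale qbd = prob_space M for M :: "'w measure" +
  fixes X :: "nat \<Rightarrow> 'w \<Rightarrow> int \<times> 's::finite" and Lm L0 Lp :: "real^'s^'s"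
  assumes is_QBD: "is_QBD M X Lm L0 Lp"
begin

abbreviation "step \<equiv> qbd_step Lm L0 Lp"

definition history :: "nat \<Rightarrow> 'w \<Rightarrow> (int \<times> 's) list" where
  "history t \<omega> = map (\<lambda>i. X i \<omega>) [0..<Suc t]"

lemma measurable_X[measurable]: "X n \<in> measurable M (count_space UNIV)"
  using is_QBD by (simp add: is_QBD_def)

lemma measurable_level[measurable]: "(\<lambda>\<omega>. fst (X n \<omega>)) \<in> measurable M (count_space UNIV)"
  by (rule measurable_compose[OF measurable_X measurable_count_space])

lemma history_Suc: "history (Suc t) \<omega> = history t \<omega> @ [X (Suc t) \<omega>]"
  by (simp add: history_def)

lemma measurable_history[measurable]: "history t \<in> measurable M (count_space UNIV)"
proof (induction t)
  case 0
  have "history 0 = (\<lambda>\<omega>. [X 0 \<omega>])"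
    by (simp add: history_def fun_eq_iff)
  then show ?case by simp
next
  case (Suc t)
  have "(\<lambda>\<omega>. (\<lambda>xs \<omega>. xs @ [X (Suc t) \<omega>]) (history t \<omega>) \<omega>) \<in> measurable M (count_space UNIV)"
    by (rule measurable_compose_countable[OF _ Suc]) simp
  then show ?case by (simp add: history_Suc[abs_def])
qed

lemma length_history[simp]: "length (history t \<omega>) = Suc t"
  by (simp add: history_def)

lemma history_nth: "i \<le> t \<Longrightarrow> history t \<omega> ! i = X i \<omega>"
  unfolding history_def by (subst nth_map_upt) auto

lemma last_history: "last (history t \<omega>) = X t \<omega>"
  by (simp add: history_def last_map)

lemma take_history: "t \<le> t' \<Longrightarrow> take (Suc t) (history t' \<omega>) = history t \<omega>"
  by (simp add: list_eq_iff_nth_eq history_nth)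

lemma measure_history_snoc:
  assumes "length xs = Suc t"
  shows "measure M {\<omega>\<in>space M. history (Suc t) \<omega> = xs @ [y]}
       = measure M {\<omega>\<in>space M. history t \<omega> = xs} * step (last xs) y"
proof -
  define zs where "zs i = (xs @ [y]) ! i" for i
  have "{\<omega>\<in>space M. history (Suc t) \<omega> = xs @ [y]} = {\<omega>\<in>space M. \<forall>i\<le>Suc t. X i \<omega> = zs i}"
    using assms unfolding history_def map_upt_eq_iff zs_def less_Suc_eq_le by simp
  moreover have "{\<omega>\<in>space M. history t \<omega> = xs} = {\<omega>\<in>space M. \<forall>i\<le>t. X i \<omega> = zs i}"
    using assms unfolding history_def map_upt_eq_iff zs_def less_Suc_eq_le
    by (intro Collect_cong) (auto simp: nth_append)
  moreover have "last xs = xs ! t"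
    using assms by (cases xs rule: rev_cases) auto
  then have "zs t = last xs" "zs (Suc t) = y"
    using assms by (auto simp: zs_def nth_append)
  moreover have "measure M {\<omega>\<in>space M. \<forall>i\<le>Suc t. X i \<omega> = zs i}
      = measure M {\<omega>\<in>space M. \<forall>i\<le>t. X i \<omega> = zs i} * step (zs t) (zs (Suc t))"
    using is_QBD unfolding is_QBD_def by blast
  ultimately show ?thesis by simp
qed

lemma measure_history_step:
  assumes "\<forall>xs\<in>S. last xs = x"
  shows "measure M {\<omega>\<in>space M. history t \<omega> \<in> S \<and> X (Suc t) \<omega> = y}
       = measure M {\<omega>\<in>space M. history t \<omega> \<in> S} * step x y"
proof -
  \<comment> \<open>Split the event along the countably many possible histories, enumerated by \<open>to_nat\<close>.\<close>
  define A where "A n = {\<omega>\<in>space M. history t \<omega> \<in> S \<and> to_nat (history t \<omega>) = n}" for n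
  define B where "B n = {\<omega>\<in>A n. X (Suc t) \<omega> = y}" for n
  have "A n \<in> sets M" "B n \<in> sets M" for n
    unfolding A_def B_def by measurable
  moreover have "disjoint_family A" "disjoint_family B"
    unfolding A_def B_def disjoint_family_on_def by auto
  moreover have "measure M (B n) = measure M (A n) * step x y" for n
  proof (cases "\<exists>xs\<in>S. length xs = Suc t \<and> to_nat xs = n")
    case True
    then obtain xs where xs: "xs \<in> S" "length xs = Suc t" "n = to_nat xs"
      by blast
    then have "A n = {\<omega>\<in>space M. history t \<omega> = xs}"
      and "B n = {\<omega>\<in>space M. history (Suc t) \<omega> = xs @ [y]}"
      unfolding A_def B_def by (auto simp: history_Suc)
    then show ?thesis
      using measure_history_snoc[OF xs(2)] assms xs(1) by simp
  next
    case False
    then have "A n = {}" "B n = {}"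
      unfolding A_def B_def by auto
    then show ?thesis by simp
  qed
  moreover have "(\<Union>n. A n) = {\<omega>\<in>space M. history t \<omega> \<in> S}"
    and "(\<Union>n. B n) = {\<omega>\<in>space M. history t \<omega> \<in> S \<and> X (Suc t) \<omega> = y}"
    unfolding A_def B_def by auto
  ultimately show ?thesis
    using measure_UNION_proportional[of A B "step x y"] by auto
qed

definition stays :: "nat \<Rightarrow> int \<Rightarrow> nat \<Rightarrow> 'w \<Rightarrow> bool" where
  "stays t l N \<omega> \<longleftrightarrow> (\<forall>m. t < m \<and> m \<le> t + N \<longrightarrow> fst (X m \<omega>) = l)"

lemma measurable_stays[measurable]: "Measurable.pred M (stays t l N)"
  unfolding stays_def by measurable

lemma stays_exit_unique:
  assumes "stays t l N \<omega>" "fst (X (Suc (t+N)) \<omega>) \<noteq> l"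
    and "stays t l N' \<omega>" "fst (X (Suc (t+N')) \<omega>) \<noteq> l"
  shows "N = N'"
proof (rule ccontr)
  have "\<not> N < N'" if "stays t l N' \<omega>" "fst (X (Suc (t+N)) \<omega>) \<noteq> l" for N N'
    using that unfolding stays_def by (auto dest: spec[of _ "Suc (t+N)"])
  moreover assume "N \<noteq> N'"
  ultimately show False
    using assms by (meson linorder_neqE_nat)
qed

lemma measure_split_phase:
  assumes [measurable]: "Measurable.pred M P"
    and "\<forall>\<omega>\<in>space M. P \<omega> \<longrightarrow> fst (X k \<omega>) = l"
  shows "measure M {\<omega>\<in>space M. P \<omega>} = (\<Sum>j\<in>UNIV. measure M {\<omega>\<in>space M. P \<omega> \<and> X k \<omega> = (l,j)})"
proof -
  have "{\<omega>\<in>space M. P \<omega>} = (\<Union>j. {\<omega>\<in>space M. P \<omega> \<and> X k \<omega> = (l,j)})"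
    using assms(2) by (auto simp: prod_eq_iff)
  moreover have "measure M (\<Union>j. {\<omega>\<in>space M. P \<omega> \<and> X k \<omega> = (l,j)})
     = (\<Sum>j\<in>UNIV. measure M {\<omega>\<in>space M. P \<omega> \<and> X k \<omega> = (l,j)})"
    by (rule finite_measure_finite_Union) (auto simp: disjoint_family_on_def)
  ultimately show ?thesis by simp
qed

lemma level_after_stay:
  assumes "\<forall>xs\<in>S. last xs = (l,i)" "history t \<omega> \<in> S" "stays t l N \<omega>"
  shows "fst (X (t+N) \<omega>) = l"
  using assms by (cases N) (auto simp: stays_def last_history[symmetric])

lemma measure_stay_then_step:
  assumes "\<forall>xs\<in>S. last xs = (l,i)"
    and "\<And>j. measure M {\<omega>\<in>space M. history t \<omega> \<in> S \<and> stays t l N \<omega> \<and> X (t+N) \<omega> = (l,j)}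
              = measure M {\<omega>\<in>space M. history t \<omega> \<in> S} * matpow L0 N $i$j"
  shows "measure M {\<omega>\<in>space M. history t \<omega> \<in> S \<and> stays t l N \<omega> \<and> X (Suc (t+N)) \<omega> = u}
       = measure M {\<omega>\<in>space M. history t \<omega> \<in> S} * (\<Sum>j\<in>UNIV. matpow L0 N $i$j * step (l,j) u)"
proof -
  define S' where "S' j = {xs. take (Suc t) xs \<in> S \<and> (\<forall>m. t<m \<and> m\<le>t+N \<longrightarrow> fst (xs!m) = l)
      \<and> last xs = (l,j)}" for j
  have S': "history (t+N) \<omega> \<in> S' j \<longleftrightarrow> history t \<omega> \<in> S \<and> stays t l N \<omega> \<and> X (t+N) \<omega> = (l,j)"
    for \<omega> j
    unfolding S'_def stays_def by (simp add: take_history history_nth last_history)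
  have "measure M {\<omega>\<in>space M. history t \<omega> \<in> S \<and> stays t l N \<omega> \<and> X (Suc (t+N)) \<omega> = u}
     = (\<Sum>j\<in>UNIV. measure M {\<omega>\<in>space M. (history t \<omega> \<in> S \<and> stays t l N \<omega> \<and> X (Suc (t+N)) \<omega> = u)
          \<and> X (t+N) \<omega> = (l,j)})"
    by (rule measure_split_phase) (use level_after_stay[OF assms(1)] in auto)
  also have "\<dots> = (\<Sum>j\<in>UNIV. measure M {\<omega>\<in>space M. history (t+N) \<omega> \<in> S' j \<and> X (Suc (t+N)) \<omega> = u})"
    by (intro sum.cong refl arg_cong[where f = "measure M"]) (auto simp: S')
  also have "\<dots> = (\<Sum>j\<in>UNIV. measure M {\<omega>\<in>space M. history (t+N) \<omega> \<in> S' j} * step (l,j) u)"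
    by (intro sum.cong refl measure_history_step) (auto simp: S'_def)
  also have "\<dots> = (\<Sum>j\<in>UNIV. measure M {\<omega>\<in>space M. history t \<omega> \<in> S} * matpow L0 N $i$j * step (l,j) u)"
    by (intro sum.cong refl) (simp add: S' assms(2))
  finally show ?thesis
    by (simp add: sum_distrib_left mult.assoc)
qed

lemma measure_stay_phase:
  assumes "\<forall>xs\<in>S. last xs = (l,i)"
  shows "measure M {\<omega>\<in>space M. history t \<omega> \<in> S \<and> stays t l N \<omega> \<and> X (t+N) \<omega> = (l,j)}
       = measure M {\<omega>\<in>space M. history t \<omega> \<in> S} * matpow L0 N $i$j"
proof (induction N arbitrary: j)
  case 0
  have "X t \<omega> = (l,i)" if "history t \<omega> \<in> S" for \<omega>
    using assms that by (auto simp: last_history[symmetric])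
  then have "{\<omega>\<in>space M. history t \<omega> \<in> S \<and> stays t l 0 \<omega> \<and> X (t+0) \<omega> = (l,j)}
     = (if j = i then {\<omega>\<in>space M. history t \<omega> \<in> S} else {})"
    by (auto simp: stays_def)
  then show ?case by (simp add: mat_def)
next
  case (Suc N)
  have "{\<omega>\<in>space M. history t \<omega> \<in> S \<and> stays t l (Suc N) \<omega> \<and> X (t + Suc N) \<omega> = (l,j)}
      = {\<omega>\<in>space M. history t \<omega> \<in> S \<and> stays t l N \<omega> \<and> X (Suc (t+N)) \<omega> = (l,j)}"
    by (auto simp: stays_def le_Suc_eq)
  moreover have "(\<Sum>j'\<in>UNIV. matpow L0 N $i$j' * step (l,j') (l,j)) = matpow L0 (Suc N) $i$j"
    by (simp add: qbd_step_def matrix_matrix_mult_def)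
  ultimately show ?case
    using measure_stay_then_step[OF assms Suc.IH, of "(l,j)"] by simp
qed

lemma measure_stay:
  assumes "\<forall>xs\<in>S. last xs = (l,i)"
  shows "measure M {\<omega>\<in>space M. history t \<omega> \<in> S \<and> stays t l N \<omega>}
       = measure M {\<omega>\<in>space M. history t \<omega> \<in> S} * (\<Sum>j\<in>UNIV. matpow L0 N $i$j)"
proof -
  have "measure M {\<omega>\<in>space M. history t \<omega> \<in> S \<and> stays t l N \<omega>}
     = (\<Sum>j\<in>UNIV. measure M {\<omega>\<in>space M. (history t \<omega> \<in> S \<and> stays t l N \<omega>) \<and> X (t+N) \<omega> = (l,j)})"
    by (rule measure_split_phase) (use level_after_stay[OF assms] in auto)
  also have "\<dots> = (\<Sum>j\<in>UNIV. measure M {\<omega>\<in>space M. history t \<omega> \<in> S} * matpow L0 N $i$j)"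
    using measure_stay_phase[OF assms] by (simp add: conj_assoc)
  finally show ?thesis
    by (simp add: sum_distrib_left)
qed

lemma measure_leave_level:
  assumes "\<forall>xs\<in>S. last xs = (l,i)" "strictly_substochastic L0" "fst w \<noteq> l"
  shows "measure M {\<omega>\<in>space M. history t \<omega> \<in> S \<and> (\<exists>N. stays t l N \<omega> \<and> X (Suc (t+N)) \<omega> = w)}
       = measure M {\<omega>\<in>space M. history t \<omega> \<in> S} * (\<Sum>j\<in>UNIV. neumann_series L0 $i$j * step (l,j) w)"
proof -
  define F where "F N = {\<omega>\<in>space M. history t \<omega> \<in> S \<and> stays t l N \<omega> \<and> X (Suc (t+N)) \<omega> = w}" for N
  define p where "p = measure M {\<omega>\<in>space M. history t \<omega> \<in> S}"
  have "F N \<in> sets M" for N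
    unfolding F_def by measurable
  moreover have "disjoint_family F"
  proof -
    have "N = N'" if "\<omega> \<in> F N" "\<omega> \<in> F N'" for \<omega> N N'
      by (rule stays_exit_unique[of t l N \<omega> N']) (use that assms(3) in \<open>auto simp: F_def\<close>)
    then show ?thesis
      unfolding disjoint_family_on_def by blast
  qed
  ultimately have "(\<lambda>N. measure M (F N)) sums measure M (\<Union>N. F N)"
    by (intro finite_measure_UNION) auto
  moreover have "measure M (F N) = p * (\<Sum>j\<in>UNIV. matpow L0 N $i$j * step (l,j) w)" for N
    unfolding F_def p_def by (rule measure_stay_then_step[OF assms(1) measure_stay_phase[OF assms(1)]])
  moreover have "(\<lambda>N. p * (\<Sum>j\<in>UNIV. matpow L0 N $i$j * step (l,j) w))
      sums (p * (\<Sum>j\<in>UNIV. neumann_series L0 $i$j * step (l,j) w))"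
    by (intro sums_mult sums_sum sums_mult2)
      (simp add: neumann_series_def summable_sums summable_matpow_entry[OF assms(2)])
  ultimately have "measure M (\<Union>N. F N) = p * (\<Sum>j\<in>UNIV. neumann_series L0 $i$j * step (l,j) w)"
    using sums_unique2 by simp
  moreover have "(\<Union>N. F N)
      = {\<omega>\<in>space M. history t \<omega> \<in> S \<and> (\<exists>N. stays t l N \<omega> \<and> X (Suc (t+N)) \<omega> = w)}"
    unfolding F_def by auto
  ultimately show ?thesis
    unfolding p_def by simp
qed

end

section \<open>Level-change times\<close>

definition always_leaves :: "(nat \<Rightarrow> int) \<Rightarrow> bool" where
  "always_leaves y \<longleftrightarrow> (\<forall>m. \<exists>n>m. y n \<noteq> y m)"

lemma tau_Suc:
  assumes "always_leaves y"
  shows "tau y k < tau y (Suc k)" "y (tau y (Suc k)) \<noteq> y (tau y k)"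
    and "\<And>n. tau y k < n \<Longrightarrow> n < tau y (Suc k) \<Longrightarrow> y n = y (tau y k)"
proof -
  have ex: "\<exists>n. tau y k < n \<and> y n \<noteq> y (tau y k)"
    using assms by (auto simp: always_leaves_def)
  show "tau y k < tau y (Suc k)" "y (tau y (Suc k)) \<noteq> y (tau y k)"
    using LeastI_ex[OF ex] by auto
  show "y n = y (tau y k)" if "tau y k < n" "n < tau y (Suc k)" for n
    using not_less_Least[of n "\<lambda>n. tau y k < n \<and> y n \<noteq> y (tau y k)"] that by auto
qed

lemma tau_mono:
  assumes "always_leaves y" "j \<le> k"
  shows "tau y j \<le> tau y k"
  using assms(2)
proof (induction k)
  case 0
  then show ?case by simp
next
  case (Suc k)
  then show ?case
    using tau_Suc(1)[OF assms(1), of k] by (auto simp: le_Suc_eq)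
qed

lemma tau_Suc_eqI:
  assumes "tau y k = t" "\<forall>m. t < m \<and> m \<le> t + N \<longrightarrow> y m = y t" "y (Suc (t+N)) \<noteq> y t"
  shows "tau y (Suc k) = Suc (t+N)"
proof -
  have "(LEAST n. t < n \<and> y n \<noteq> y t) = Suc (t+N)"
  proof (rule Least_equality)
    show "t < Suc (t+N) \<and> y (Suc (t+N)) \<noteq> y t"
      using assms(3) by simp
  next
    fix n
    assume "t < n \<and> y n \<noteq> y t"
    then show "Suc (t+N) \<le> n"
      using assms(2) by (meson not_less_eq_eq)
  qed
  then show ?thesis
    using assms(1) by simp
qed

lemma tau_cong:
  assumes "always_leaves y" "\<forall>m\<le>tau y k. y' m = y m" "j \<le> k"
  shows "tau y' j = tau y j"
  using assms(3)
proof (induction j)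
  case 0
  then show ?case by simp
next
  case (Suc j)
  define t where "t = tau y j"
  have IH: "tau y' j = t"
    using Suc by (simp add: t_def)
  have "tau y (Suc j) \<le> tau y k"
    by (rule tau_mono[OF assms(1) Suc.prems])
  then have agree: "y' m = y m" if "m \<le> tau y (Suc j)" for m
    using that assms(2) by simp
  note jump = tau_Suc[OF assms(1), of j, folded t_def]
  have "tau y' (Suc j) = Suc (t + (tau y (Suc j) - Suc t))"
  proof (rule tau_Suc_eqI[OF IH])
    show "\<forall>m. t < m \<and> m \<le> t + (tau y (Suc j) - Suc t) \<longrightarrow> y' m = y' t"
      using jump agree by (auto simp: less_imp_le)
    show "y' (Suc (t + (tau y (Suc j) - Suc t))) \<noteq> y' t"
      using jump agree by (simp add: Suc_diff_Suc less_imp_le)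
  qed
  then show ?case
    using jump(1) by simp
qed

lemma phase_at_tau_Suc_iff:
  fixes x :: "nat \<Rightarrow> int \<times> 's"
  assumes "always_leaves (\<lambda>m. fst (x m))" "tau (\<lambda>m. fst (x m)) k = t" "x t = (l,i)"
  shows "x (tau (\<lambda>m. fst (x m)) (Suc k)) = (l',j) \<longleftrightarrow>
    l' \<noteq> l \<and> (\<exists>N. (\<forall>m. t < m \<and> m \<le> t + N \<longrightarrow> fst (x m) = l) \<and> x (Suc (t+N)) = (l',j))"
proof
  let ?t' = "tau (\<lambda>m. fst (x m)) (Suc k)"
  note jump = tau_Suc[OF assms(1), of k, unfolded assms(2)]
  assume x': "x ?t' = (l',j)"
  define N where "N = ?t' - Suc t"
  have "?t' = Suc (t+N)"
    using jump(1) by (simp add: N_def)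
  moreover have "\<forall>m. t < m \<and> m \<le> t + N \<longrightarrow> fst (x m) = l"
    using jump(3) assms(3) calculation by fastforce
  moreover have "l' \<noteq> l"
    using jump(2) x' assms(3) by simp
  ultimately show "l' \<noteq> l \<and> (\<exists>N. (\<forall>m. t < m \<and> m \<le> t + N \<longrightarrow> fst (x m) = l) \<and> x (Suc (t+N)) = (l',j))"
    using x' by metis
next
  assume "l' \<noteq> l \<and> (\<exists>N. (\<forall>m. t < m \<and> m \<le> t + N \<longrightarrow> fst (x m) = l) \<and> x (Suc (t+N)) = (l',j))"
  then obtain N where "l' \<noteq> l" "\<forall>m. t < m \<and> m \<le> t + N \<longrightarrow> fst (x m) = l" "x (Suc (t+N)) = (l',j)"
    by blast
  moreover have "tau (\<lambda>m. fst (x m)) (Suc k) = Suc (t+N)"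
    by (rule tau_Suc_eqI[OF assms(2)]) (use calculation assms(3) in auto)
  ultimately show "x (tau (\<lambda>m. fst (x m)) (Suc k)) = (l',j)"
    by simp
qed

section \<open>The chain observed at level changes\<close>

locale embedded_qbd = uniformised_generator T Sp lam mu
  + qbd M X "Cm T Sp lam mu" "C0 T Sp lam mu" "Cp T Sp lam mu"
  for T :: "real^'s::finite^'s" and Sp lam mu and M :: "'w measure" and X
begin

definition level :: "'w \<Rightarrow> nat \<Rightarrow> int" where
  "level \<omega> = (\<lambda>m. fst (X m \<omega>))"

definition Leaves :: "'w set" where
  "Leaves = {\<omega>\<in>space M. always_leaves (level \<omega>)}"

lemma Leaves_sets[measurable]: "Leaves \<in> sets M"
  unfolding Leaves_def always_leaves_def level_def by measurable

lemma measure_never_leave: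
  "measure M {\<omega>\<in>space M. X m \<omega> = (l,i) \<and> (\<forall>n>m. fst (X n \<omega>) = l)} = 0"
  (is "measure M ?E = 0")
proof -
  obtain r where r: "0 \<le> r" "r < 1" "\<forall>i. (\<Sum>j\<in>UNIV. C0 T Sp lam mu $i$j) \<le> r"
    using strictly_substochastic_row_sum_bound[OF C0_strictly_substochastic] by blast
  have nonneg: "\<forall>i j. 0 \<le> C0 T Sp lam mu $i$j"
    using C0_strictly_substochastic by (simp add: strictly_substochastic_def)
  define S where "S = {xs :: (int \<times> 's) list. last xs = (l,i)}"
  have "measure M ?E \<le> r ^ N" for N
  proof -
    have "?E \<subseteq> {\<omega>\<in>space M. history m \<omega> \<in> S \<and> stays m l N \<omega>}"
      by (auto simp: S_def last_history stays_def)
    then have "measure M ?E \<le> measure M {\<omega>\<in>space M. history m \<omega> \<in> S \<and> stays m l N \<omega>}"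
      by (intro finite_measure_mono) measurable
    also have "\<dots> = measure M {\<omega>\<in>space M. history m \<omega> \<in> S} * (\<Sum>j\<in>UNIV. matpow (C0 T Sp lam mu) N $i$j)"
      by (rule measure_stay) (simp add: S_def)
    also have "\<dots> \<le> 1 * r ^ N"
      by (intro mult_mono matpow_row_sum_le[OF nonneg r(3,1)])
        (auto intro!: sum_nonneg matpow_nonneg[OF nonneg])
    finally show ?thesis by simp
  qed
  moreover have "(\<lambda>N. r ^ N) \<longlonglongrightarrow> 0"
    using r by (intro LIMSEQ_power_zero) simp
  ultimately have "measure M ?E \<le> 0"
    by (intro LIMSEQ_le_const) auto
  then show ?thesis
    using measure_nonneg[of M ?E] by linarith
qed

lemma AE_always_leaves: "AE \<omega> in M. always_leaves (level \<omega>)"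
proof -
  have "AE \<omega> in M. X m \<omega> = x \<longrightarrow> (\<exists>n>m. fst (X n \<omega>) \<noteq> fst x)" for m x
  proof (rule AE_I')
    have "{\<omega>\<in>space M. X m \<omega> = x \<and> (\<forall>n>m. fst (X n \<omega>) = fst x)} \<in> sets M"
      by measurable
    then show "{\<omega>\<in>space M. X m \<omega> = x \<and> (\<forall>n>m. fst (X n \<omega>) = fst x)} \<in> null_sets M"
      using measure_never_leave[of m "fst x" "snd x"] by (simp add: null_sets_def emeasure_eq_measure)
  qed auto
  then have "\<forall>m. AE \<omega> in M. \<forall>x. X m \<omega> = x \<longrightarrow> (\<exists>n>m. fst (X n \<omega>) \<noteq> fst x)"
    by (intro allI, subst AE_all_countable) blast
  then have "AE \<omega> in M. \<forall>m x. X m \<omega> = x \<longrightarrow> (\<exists>n>m. fst (X n \<omega>) \<noteq> fst x)"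
    by (subst AE_all_countable)
  then show ?thesis
    by eventually_elim (auto simp: always_leaves_def level_def)
qed

lemma measure_Leaves_Int:
  assumes [measurable]: "Measurable.pred M Q"
  shows "measure M {\<omega>\<in>space M. \<omega> \<in> Leaves \<and> Q \<omega>} = measure M {\<omega>\<in>space M. Q \<omega>}"
proof (rule finite_measure_eq_AE)
  show "AE \<omega> in M. (\<omega> \<in> {\<omega>\<in>space M. \<omega> \<in> Leaves \<and> Q \<omega>}) = (\<omega> \<in> {\<omega>\<in>space M. Q \<omega>})"
    using AE_always_leaves by eventually_elim (auto simp: Leaves_def)
qed measurable

lemma measurable_tau[measurable]: "(\<lambda>\<omega>. tau (level \<omega>) k) \<in> measurable M (count_space UNIV)"
proof (induction k)
  case 0
  then show ?case by simp
next
  case (Suc k)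
  have "(\<lambda>\<omega>. (\<lambda>t \<omega>. fst (X t \<omega>)) (tau (level \<omega>) k) \<omega>) \<in> measurable M (count_space UNIV)"
    by (rule measurable_compose_countable[OF _ Suc]) simp
  then have [measurable]: "(\<lambda>\<omega>. fst (X (tau (level \<omega>) k) \<omega>)) \<in> measurable M (count_space UNIV)"
    by simp
  have "(\<lambda>\<omega>. LEAST n. tau (level \<omega>) k < n \<and> fst (X n \<omega>) \<noteq> fst (X (tau (level \<omega>) k) \<omega>))
      \<in> measurable M (count_space UNIV)"
    using Suc by measurable
  then show ?case
    by (simp add: level_def)
qed

definition shift_state :: "int \<times> 's \<Rightarrow> real \<times> 's" where
  "shift_state x = (if snd x \<in> Sp then of_int (fst x) - 1/2 else of_int (fst x) + 1/2, snd x)"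

lemma shift_state_eq_iff[simp]: "shift_state x = shift_state y \<longleftrightarrow> x = y"
  by (cases x; cases y) (auto simp: shift_state_def split: if_splits)

lemma range_shift_state: "z \<in> range shift_state \<longleftrightarrow> (\<exists>a::int. fst z = of_int a + 1/2)"
proof
  assume "z \<in> range shift_state"
  then obtain x where "z = shift_state x"
    by blast
  then have "fst z = of_int (if snd x \<in> Sp then fst x - 1 else fst x) + 1/2"
    by (simp add: shift_state_def)
  then show "\<exists>a::int. fst z = of_int a + 1/2"
    by blast
next
  assume "\<exists>a::int. fst z = of_int a + 1/2"
  then obtain a :: int where a: "fst z = of_int a + 1/2"
    by blast
  then have "shift_state (if snd z \<in> Sp then a + 1 else a, snd z) = z"
    by (auto simp: shift_state_def prod_eq_iff)
  then show "z \<in> range shift_state"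
    by (metis rangeI)
qed

definition jump_chain :: "nat \<Rightarrow> 'w \<Rightarrow> real \<times> 's" where
  "jump_chain k \<omega> = shift_state (X (tau (level \<omega>) k) \<omega>)"

lemma measurable_jump_chain[measurable]: "jump_chain k \<in> measurable M (count_space UNIV)"
proof -
  have "(\<lambda>\<omega>. (\<lambda>t \<omega>. shift_state (X t \<omega>)) (tau (level \<omega>) k) \<omega>) \<in> measurable M (count_space UNIV)"
    by (rule measurable_compose_countable[OF _ measurable_tau]) simp
  then show ?thesis
    by (simp add: jump_chain_def[abs_def])
qed

lemma tau_jump_chain_eq_if_history_eq:
  assumes "\<omega>' \<in> Leaves" "history t \<omega> = history t \<omega>'" "tau (level \<omega>') k = t" "j \<le> k"
  shows "tau (level \<omega>) j = tau (level \<omega>') j" "jump_chain j \<omega> = jump_chain j \<omega>'"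
proof -
  have X_eq: "X m \<omega> = X m \<omega>'" if "m \<le> t" for m
    using arg_cong[OF assms(2), of "\<lambda>xs. xs ! m"] that by (simp add: history_nth)
  have leaves: "always_leaves (level \<omega>')"
    using assms(1) by (simp add: Leaves_def)
  show tau_eq: "tau (level \<omega>) j = tau (level \<omega>') j"
    by (rule tau_cong[OF leaves _ assms(4)]) (use X_eq assms(3) in \<open>auto simp: level_def\<close>)
  have "tau (level \<omega>') j \<le> t"
    using tau_mono[OF leaves assms(4)] assms(3) by simp
  then show "jump_chain j \<omega> = jump_chain j \<omega>'"
    unfolding jump_chain_def tau_eq using X_eq by simp
qed

definition cylinder_at :: "nat \<Rightarrow> (nat \<Rightarrow> real \<times> 's) \<Rightarrow> nat \<Rightarrow> 'w set" where
  "cylinder_at k zs t = {\<omega>\<in>space M. \<omega> \<in> Leaves \<and> (\<forall>i\<le>k. jump_chain i \<omega> = zs i) \<and> tau (level \<omega>) k = t}"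

lemma cylinder_at_sets[measurable]: "cylinder_at k zs t \<in> sets M"
  unfolding cylinder_at_def by measurable

text \<open>\<open>tau_k\<close> is a stopping time: whether the jump chain starts with \<open>zs 0, \<dots>, zs k\<close> and
  \<open>tau_k = t\<close> is decided by the history up to time \<open>t\<close>.\<close>

lemma cylinder_at_history:
  "cylinder_at k zs t = {\<omega>\<in>space M. \<omega> \<in> Leaves \<and> history t \<omega> \<in> history t ` cylinder_at k zs t}"
proof (intro set_eqI iffI)
  fix \<omega>
  assume "\<omega> \<in> {\<omega>\<in>space M. \<omega> \<in> Leaves \<and> history t \<omega> \<in> history t ` cylinder_at k zs t}"
  then obtain \<omega>' where \<omega>: "\<omega> \<in> space M" "\<omega> \<in> Leaves" and \<omega>': "\<omega>' \<in> cylinder_at k zs t"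
    and "history t \<omega> = history t \<omega>'"
    by blast
  with tau_jump_chain_eq_if_history_eq[of \<omega>' t \<omega> k] show "\<omega> \<in> cylinder_at k zs t"
    unfolding cylinder_at_def by auto
qed (auto simp: cylinder_at_def)

definition jump_probability :: "int \<times> 's \<Rightarrow> int \<times> 's \<Rightarrow> real" where
  "jump_probability x y = (if fst y = fst x then 0
     else \<Sum>j\<in>UNIV. neumann_series (C0 T Sp lam mu) $ snd x $ j * step (fst x, j) y)"

lemma measure_cylinder_at_next:
  assumes "zs k = shift_state x" "zs (Suc k) = shift_state y"
  shows "measure M {\<omega>\<in>cylinder_at k zs t. jump_chain (Suc k) \<omega> = zs (Suc k)}
       = measure M (cylinder_at k zs t) * jump_probability x y"
proof -
  obtain l i l' j where x: "x = (l,i)" and y: "y = (l',j)"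
    by (metis surj_pair)
  note zs = assms[unfolded x y]
  define S where "S = history t ` cylinder_at k zs t"
  have X_t: "X t \<omega> = (l,i)" if "\<omega> \<in> cylinder_at k zs t" for \<omega>
    using that zs(1) by (auto simp: cylinder_at_def jump_chain_def)
  then have last_S: "\<forall>xs\<in>S. last xs = (l,i)"
    by (auto simp: S_def last_history)
  have jump_iff: "jump_chain (Suc k) \<omega> = zs (Suc k) \<longleftrightarrow> l' \<noteq> l \<and> (\<exists>N. stays t l N \<omega> \<and> X (Suc (t+N)) \<omega> = (l',j))"
    if "\<omega> \<in> cylinder_at k zs t" for \<omega>
    using phase_at_tau_Suc_iff[of "\<lambda>m. X m \<omega>" k t l i l' j] that X_t[OF that] zs(2)
    by (simp add: jump_chain_def cylinder_at_def Leaves_def level_def stays_def)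
  show ?thesis
  proof (cases "l' = l")
    case True
    then have empty: "{\<omega>\<in>cylinder_at k zs t. jump_chain (Suc k) \<omega> = zs (Suc k)} = {}"
      using jump_iff by auto
    show ?thesis
      using True by (simp add: empty x y jump_probability_def)
  next
    case False
    have "{\<omega>\<in>cylinder_at k zs t. jump_chain (Suc k) \<omega> = zs (Suc k)}
        = {\<omega>\<in>space M. \<omega> \<in> Leaves \<and> history t \<omega> \<in> S \<and> (\<exists>N. stays t l N \<omega> \<and> X (Suc (t+N)) \<omega> = (l',j))}"
      using jump_iff False cylinder_at_history[of k zs t] unfolding S_def by blast
    then have "measure M {\<omega>\<in>cylinder_at k zs t. jump_chain (Suc k) \<omega> = zs (Suc k)}
        = measure M {\<omega>\<in>space M. history t \<omega> \<in> S} * (\<Sum>j'\<in>UNIV. neumann_series (C0 T Sp lam mu) $i$j' * step (l,j') (l',j))"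
      using measure_leave_level[OF last_S C0_strictly_substochastic] False
      by (simp add: measure_Leaves_Int)
    moreover have "measure M (cylinder_at k zs t) = measure M {\<omega>\<in>space M. history t \<omega> \<in> S}"
      by (subst cylinder_at_history) (simp add: S_def measure_Leaves_Int)
    ultimately show ?thesis
      using False by (simp add: x y jump_probability_def)
  qed
qed

lemma measure_jump_chain_cylinder_Suc:
  assumes "zs k = shift_state x" "zs (Suc k) = shift_state y"
  shows "measure M {\<omega>\<in>space M. \<forall>i\<le>Suc k. jump_chain i \<omega> = zs i}
       = measure M {\<omega>\<in>space M. \<forall>i\<le>k. jump_chain i \<omega> = zs i} * jump_probability x y"
proof -
  define A where "A = cylinder_at k zs"
  define B where "B t = {\<omega>\<in>A t. jump_chain (Suc k) \<omega> = zs (Suc k)}" for t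
  have "range A \<subseteq> sets M" "range B \<subseteq> sets M"
    unfolding A_def B_def by auto
  moreover have "disjoint_family A" "disjoint_family B"
    unfolding A_def B_def cylinder_at_def disjoint_family_on_def by auto
  moreover have "measure M (\<Union>t. A t) = measure M {\<omega>\<in>space M. \<forall>i\<le>k. jump_chain i \<omega> = zs i}"
  proof -
    have "(\<Union>t. A t) = {\<omega>\<in>space M. \<omega> \<in> Leaves \<and> (\<forall>i\<le>k. jump_chain i \<omega> = zs i)}"
      unfolding A_def cylinder_at_def by auto
    then show ?thesis
      by (simp add: measure_Leaves_Int)
  qed
  moreover have "measure M (\<Union>t. B t) = measure M {\<omega>\<in>space M. \<forall>i\<le>Suc k. jump_chain i \<omega> = zs i}"
  proof -
    have "(\<Union>t. B t) = {\<omega>\<in>space M. \<omega> \<in> Leaves \<and> (\<forall>i\<le>Suc k. jump_chain i \<omega> = zs i)}"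
      unfolding A_def B_def cylinder_at_def by (auto simp: le_Suc_eq)
    then show ?thesis
      by (simp add: measure_Leaves_Int)
  qed
  ultimately show ?thesis
    using measure_UNION_proportional[of A B] measure_cylinder_at_next[OF assms]
    unfolding B_def A_def by simp
qed

lemma qbd_step_D_shift_state:
  "qbd_step (Dm K Sp) (D0 K Sp) (Dp K Sp) (shift_state (l,i)) (shift_state (l',j))
    = (if l' = l then 0 else if (l' = l - 1 \<and> j \<notin> Sp) \<or> (l' = l + 1 \<and> j \<in> Sp) then K$i$j else 0)"
  by (auto simp: qbd_step_def shift_state_def Dm_def D0_def Dp_def algebra_simps)

lemma qbd_step_D_outside_range:
  assumes "z \<notin> range shift_state"
  shows "qbd_step (Dm K Sp) (D0 K Sp) (Dp K Sp) (shift_state x) z = 0"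
proof -
  obtain a :: int where a: "fst (shift_state x) = of_int a + 1/2"
    using range_shift_state by blast
  have "fst z \<noteq> of_int b + 1/2" for b :: int
    using assms range_shift_state by blast
  from this[of "a - 1"] this[of a] this[of "a + 1"] a show ?thesis
    by (auto simp: qbd_step_def algebra_simps)
qed

lemma exit_probability_eq_Kmat:
  fixes l l' :: int
  assumes "l' \<noteq> l"
  shows "(\<Sum>j'\<in>UNIV. neumann_series (C0 T Sp lam mu) $i$j' * step (l,j') (l',j))
       = (if (l' = l - 1 \<and> j \<notin> Sp) \<or> (l' = l + 1 \<and> j \<in> Sp) then Kmat T Sp lam mu $i$j else 0)"
proof -
  have step: "step (l,j') (l',j) = (if (l' = l - 1 \<and> j \<notin> Sp) \<or> (l' = l + 1 \<and> j \<in> Sp)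
      then ((1/2) *\<^sub>R Bmat T Sp lam mu)$j'$j else 0)" for j'
    using assms by (cases "l' = l - 1"; cases "l' = l + 1") (auto simp: qbd_step_def Cm_def Cp_def Bmat_def)
  show ?thesis
    by (simp add: step Kmat_eq_neumann_series matrix_matrix_mult_def if_distrib cong: if_cong)
qed

lemma qbd_step_D_eq_jump_probability:
  "qbd_step (Dm (Kmat T Sp lam mu) Sp) (D0 (Kmat T Sp lam mu) Sp) (Dp (Kmat T Sp lam mu) Sp)
      (shift_state x) (shift_state y) = jump_probability x y"
proof -
  obtain l i l' j where "x = (l,i)" "y = (l',j)"
    by (metis surj_pair)
  then show ?thesis
    by (cases "l' = l") (simp_all add: qbd_step_D_shift_state exit_probability_eq_Kmat jump_probability_def)
qed

lemma is_QBD_jump_chain: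
  "is_QBD M jump_chain (Dm (Kmat T Sp lam mu) Sp) (D0 (Kmat T Sp lam mu) Sp) (Dp (Kmat T Sp lam mu) Sp)"
  unfolding is_QBD_def
proof (intro conjI allI)
  fix k and zs :: "nat \<Rightarrow> real \<times> 's"
  let ?step = "qbd_step (Dm (Kmat T Sp lam mu) Sp) (D0 (Kmat T Sp lam mu) Sp) (Dp (Kmat T Sp lam mu) Sp)"
  have in_range: "jump_chain i \<omega> \<in> range shift_state" for i \<omega>
    by (simp add: jump_chain_def)
  show "measure M {\<omega>\<in>space M. \<forall>i\<le>Suc k. jump_chain i \<omega> = zs i}
      = measure M {\<omega>\<in>space M. \<forall>i\<le>k. jump_chain i \<omega> = zs i} * ?step (zs k) (zs (Suc k))"
  proof (cases "zs k \<in> range shift_state")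
    case False
    then have "jump_chain k \<omega> \<noteq> zs k" for \<omega>
      using in_range by metis
    then have empty: "{\<omega>\<in>space M. \<forall>i\<le>Suc k. jump_chain i \<omega> = zs i} = {}" "{\<omega>\<in>space M. \<forall>i\<le>k. jump_chain i \<omega> = zs i} = {}"
      by (auto intro!: exI[of _ k])
    show ?thesis
      by (simp add: empty)
  next
    case True
    then obtain x where zs_k: "zs k = shift_state x"
      by auto
    show ?thesis
    proof (cases "zs (Suc k) \<in> range shift_state")
      case False
      then have "jump_chain (Suc k) \<omega> \<noteq> zs (Suc k)" for \<omega>
        using in_range by metis
      then have empty: "{\<omega>\<in>space M. \<forall>i\<le>Suc k. jump_chain i \<omega> = zs i} = {}"
        by (auto intro!: exI[of _ "Suc k"])
      have "?step (zs k) (zs (Suc k)) = 0"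
        unfolding zs_k by (rule qbd_step_D_outside_range[OF False])
      then show ?thesis
        by (simp add: empty)
    next
      case True
      then obtain y where zs_Suc_k: "zs (Suc k) = shift_state y"
        by auto
      show ?thesis
        unfolding measure_jump_chain_cylinder_Suc[OF zs_k zs_Suc_k] zs_k zs_Suc_k
        by (simp add: qbd_step_D_eq_jump_probability)
    qed
  qed
qed simp

end

theorem theorem6:
  fixes T :: "real^'s::finite^'s" and Sp :: "'s set" and lam mu :: real
    and M :: "'w measure" and Y :: "nat \<Rightarrow> 'w \<Rightarrow> int" and \<kappa> :: "nat \<Rightarrow> 'w \<Rightarrow> 's"
  assumes "generator T"
    and "Sp \<noteq> {}" and "Sp \<noteq> UNIV"
    and "lam > 0" and "mu > 0"
    and "\<forall>i. \<bar>T$i$i\<bar> \<le> lam" and "\<forall>i. \<bar>T$i$i\<bar> \<le> mu"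
    and "prob_space M"
    and "is_QBD M (\<lambda>n \<omega>. (Y n \<omega>, \<kappa> n \<omega>)) (Cm T Sp lam mu) (C0 T Sp lam mu) (Cp T Sp lam mu)"
    and "AE \<omega> in M. Y 0 \<omega> = 1 \<and> \<kappa> 0 \<omega> \<in> Sp"
  shows "invertible (mat 1 - (1/2) *\<^sub>R Amat T Sp lam mu)
    \<and> invertible (Xmat T Sp lam mu)
    \<and> Kmat T Sp lam mu = matrix_inv (Xmat T Sp lam mu) ** Ymat T Sp lam mu
    \<and> (AE \<omega> in M. \<forall>k. \<exists>n. tau (\<lambda>m. Y m \<omega>) k < n \<and> Y n \<omega> \<noteq> Y (tau (\<lambda>m. Y m \<omega>) k) \<omega>)
    \<and> is_QBD M (embedded Y \<kappa> Sp)
        (Dm (Kmat T Sp lam mu) Sp) (D0 (Kmat T Sp lam mu) Sp) (Dp (Kmat T Sp lam mu) Sp)"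
proof -
  \<comment> \<open>The QBD property concerns transition probabilities only.\<close>
  interpret embedded_qbd T Sp lam mu M "\<lambda>n \<omega>. (Y n \<omega>, \<kappa> n \<omega>)"
    by (intro embedded_qbd.intro uniformised_generator.intro qbd.intro qbd_axioms.intro)
      (use assms in auto)
  have level: "level \<omega> = (\<lambda>m. Y m \<omega>)" for \<omega>
    by (simp add: level_def)
  have "invertible (mat 1 - (1/2) *\<^sub>R Amat T Sp lam mu)"
    using right_inverse_imp_invertible[OF I_minus_C0_right_inverse] by (simp add: C0_eq_half_Amat)
  moreover have "invertible (Xmat T Sp lam mu)"
    by (rule right_inverse_imp_invertible[OF Xmat_right_inverse])
  moreover have "AE \<omega> in M. \<forall>k. \<exists>n. tau (\<lambda>m. Y m \<omega>) k < n \<and> Y n \<omega> \<noteq> Y (tau (\<lambda>m. Y m \<omega>) k) \<omega>"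
    using AE_always_leaves
  proof eventually_elim
    case (elim \<omega>)
    then show ?case
      using tau_Suc(1,2)[OF elim[unfolded level]] by blast
  qed
  moreover have "jump_chain = embedded Y \<kappa> Sp"
    by (simp add: fun_eq_iff jump_chain_def embedded_def Let_def shift_state_def level)
  then have "is_QBD M (embedded Y \<kappa> Sp)
      (Dm (Kmat T Sp lam mu) Sp) (D0 (Kmat T Sp lam mu) Sp) (Dp (Kmat T Sp lam mu) Sp)"
    using is_QBD_jump_chain by simp
  ultimately show ?thesis
    using Kmat_eq_Xmat_inv_Ymat by blast
qed

end
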